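(* Consider the NWLA-CuSum stopping time $\overline{\tau}(b)$ with window size $w$ as defined in the context. For any $w>0$ and any $b>0$, $\mathbb{E}_\infty[\overline{\tau}(b)]\ge e^b$. Consequently, $\overline{\tau}(\overline{b}_\alpha)\in\mathcal{C}_\alpha$ if $\overline{b}_\alpha=|\log\alpha|$.
   Context: Let $X_1,X_2,\dots\in\mathbb{R}^d$ be independent with an unknown change-point $\nu$: before $\nu$ the density is the known $p_0$, from $\nu$ on it is $p_1$ (w.r.t. a dominating measure $\mu$). $\mathbb{P}_\infty,\mathbb{E}_\infty$ denote probability/expectation when no change occurs (all observations have density $p_0$). $\mathcal{C}_\alpha:=\{\tau:1/\mathbb{E}_\infty[\tau]\le\alpha\}$. A fixed density estimation procedure maps a finite collection of observations to a density w.r.t. $\mu$; for a positive integer $w$ and $n>w$, $\widehat{p}^w_n$ is its output on $X_{n-w},\dots,X_{n-1}$. Let $\widehat{Z}^w_n:=\log(\widehat{p}^w_n(X_n)/p_0(X_n))$ for $n>w$; the NWLA-CuSum statistic is $\overline{W}(1)=\dots=\overline{W}(w)=0$, $\overline{W}(n)=(\overline{W}(n-1))^++\widehat{Z}^w_n$ for $n>w$, and $\overline{\tau}(b):=\inf\{n>w:\overline{W}(n)\ge b\}$. *)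

theory Defs
  imports "HOL-Probability.Probability"
begin

definition llr :: "real \<Rightarrow> real \<Rightarrow> ereal" where
  "llr q p = (if q \<le> 0 then -\<infinity> else if p \<le> 0 then \<infinity> else ereal (ln (q / p)))"

fun cusum :: "nat \<Rightarrow> (nat \<Rightarrow> ereal) \<Rightarrow> nat \<Rightarrow> ereal" where
  "cusum w Z 0 = 0"
| "cusum w Z (Suc n) = (if Suc n \<le> w then 0 else max (cusum w Z n) 0 + Z (Suc n))"

definition nwla_Z :: "nat \<Rightarrow> ('a list \<Rightarrow> 'a \<Rightarrow> real) \<Rightarrow> ('a \<Rightarrow> real)
    \<Rightarrow> (nat \<Rightarrow> 'w \<Rightarrow> 'a) \<Rightarrow> 'w \<Rightarrow> nat \<Rightarrow> ereal" where
  "nwla_Z w est p0 X \<omega> n = llr (est (map (\<lambda>i. X i \<omega>) [n - w..<n]) (X n \<omega>)) (p0 (X n \<omega>))"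

definition nwla_W :: "nat \<Rightarrow> ('a list \<Rightarrow> 'a \<Rightarrow> real) \<Rightarrow> ('a \<Rightarrow> real)
    \<Rightarrow> (nat \<Rightarrow> 'w \<Rightarrow> 'a) \<Rightarrow> 'w \<Rightarrow> nat \<Rightarrow> ereal" where
  "nwla_W w est p0 X \<omega> = cusum w (nwla_Z w est p0 X \<omega>)"

definition nwla_tau :: "nat \<Rightarrow> ('a list \<Rightarrow> 'a \<Rightarrow> real) \<Rightarrow> ('a \<Rightarrow> real)
    \<Rightarrow> (nat \<Rightarrow> 'w \<Rightarrow> 'a) \<Rightarrow> real \<Rightarrow> 'w \<Rightarrow> enat" where
  "nwla_tau w est p0 X b \<omega> = (INF n \<in> {n. w < n \<and> ereal b \<le> nwla_W w est p0 X \<omega> n}. enat n)"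

end

theory Submission
  imports Defs
begin

text \<open>Alongside the CuSum W run the Shiryaev--Roberts recursion R(n) = (1 + R(n-1)) e^Z(n),
  frozen once W reaches b. Before the crossing e^(W(n)^+) \<le> 1 + R(n), so at the crossing
  R \<ge> e^b. Under the null, e^Z(n) is the ratio of a density estimated from the past window to
  p0 at an independent observation with density p0, so its conditional mean is at most 1; hence
  E R(N) \<le> \<Sum>m<N P(\<tau> > m) \<le> E \<tau>. Combined with e^b \<le> E R(N) + e^b P(\<tau> > N)
  and P(\<tau> > N) \<rightarrow> 0 when E \<tau> < \<infinity>, this gives e^b \<le> E \<tau>.\<close>

lemma (in prob_space) nn_integral_indep_var:
  assumes indep: "indep_var N Y K X" and f: "f \<in> borel_measurable (N \<Otimes>\<^sub>M K)"
  shows "(\<integral>\<^sup>+ \<omega>. f (Y \<omega>, X \<omega>) \<partial>M) = (\<integral>\<^sup>+ \<omega>. \<integral>\<^sup>+ \<omega>'. f (Y \<omega>, X \<omega>') \<partial>M \<partial>M)"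
proof -
  have [measurable]: "Y \<in> measurable M N" "X \<in> measurable M K"
    using indep by (simp_all add: indep_var_eq)
  note f [measurable]
  interpret X: prob_space "distr M K X"
    by (rule prob_space_distr) simp
  have "(\<integral>\<^sup>+ \<omega>. f (Y \<omega>, X \<omega>) \<partial>M)
      = integral\<^sup>N (distr M (N \<Otimes>\<^sub>M K) (\<lambda>\<omega>. (Y \<omega>, X \<omega>))) f"
    by (simp add: nn_integral_distr)
  also have "\<dots> = integral\<^sup>N (distr M N Y \<Otimes>\<^sub>M distr M K X) f"
    using indep by (simp add: indep_var_distribution_eq)
  also have "\<dots> = (\<integral>\<^sup>+ u. \<integral>\<^sup>+ z. f (u, z) \<partial>distr M K X \<partial>distr M N Y)"
    by (simp add: X.nn_integral_fst cong: measurable_cong_sets)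
  also have "\<dots> = (\<integral>\<^sup>+ u. \<integral>\<^sup>+ \<omega>'. f (u, X \<omega>') \<partial>M \<partial>distr M N Y)"
    by (intro nn_integral_cong) (simp add: nn_integral_distr measurable_Pair2[OF f])
  also have "\<dots> = (\<integral>\<^sup>+ \<omega>. \<integral>\<^sup>+ \<omega>'. f (Y \<omega>, X \<omega>') \<partial>M \<partial>M)"
    by (simp add: nn_integral_distr)
  finally show ?thesis .
qed

text \<open>If the partial sums of P are bounded by a finite T, then P N tends to 0.\<close>
lemma ennreal_le_of_le_plus_summable:
  fixes e T c :: ennreal and P :: "nat \<Rightarrow> ennreal"
  assumes le: "\<And>N. e \<le> T + c * P N" and sums: "\<And>N. (\<Sum>m<N. P m) \<le> T" and "c \<noteq> \<infinity>"
  shows "e \<le> T"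
proof (cases "T = \<infinity>")
  case False
  have P_le: "P n \<le> T" for n
  proof -
    have "P n \<le> (\<Sum>m<Suc n. P m)"
      by (auto intro: add_increasing)
    then show ?thesis
      using sums order_trans by blast
  qed
  define p where "p n = enn2real (P n)" for n
  have "P n < \<infinity>" for n
    using P_le[of n] False by (simp add: le_less_trans top.not_eq_extremum)
  then have P_eq: "P = (\<lambda>n. ennreal (p n))"
    by (simp add: p_def fun_eq_iff)
  have "(\<Sum>n. ennreal (p n)) \<le> T"
    using sums unfolding P_eq by (intro suminf_le_const) auto
  then have "summable p"
    using False by (intro summable_suminf_not_top) (auto simp: p_def top_unique)
  then have "(\<lambda>n. ennreal (p n)) \<longlonglongrightarrow> ennreal 0"
    by (intro tendsto_ennrealI summable_LIMSEQ_zero)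
  then have "P \<longlonglongrightarrow> 0"
    by (simp add: P_eq)
  then have "(\<lambda>N. T + c * P N) \<longlonglongrightarrow> T + c * 0"
    using \<open>c \<noteq> \<infinity>\<close> by (intro tendsto_intros) auto
  then show ?thesis
    using le by (auto intro: LIMSEQ_le_const)
qed simp

lemma one_divide_le_ennreal:
  assumes "ennreal (1 / a) \<le> T" "0 < a"
  shows "1 / T \<le> ennreal a"
proof (rule divide_le_posI_ennreal)
  show "0 < T"
    using assms by (auto intro: order.strict_trans2[rotated])
  have "1 = ennreal (1 / a) * ennreal a"
    using assms(2) by (simp flip: ennreal_mult)
  also have "\<dots> \<le> T * ennreal a"
    using assms(1) by (rule mult_right_mono) simp
  finally show "1 \<le> T * ennreal a" .
qed

lemma sum_indicator_le_ennreal_of_enat: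
  assumes "\<And>m. P m \<Longrightarrow> enat m < t"
  shows "(\<Sum>m<N. if P m then 1 else 0 :: ennreal) \<le> ennreal_of_enat t"
proof (cases t)
  case (enat t')
  have "{..<N} \<inter> Collect P \<subseteq> {..<t'}"
    using assms enat by auto
  then have "card ({..<N} \<inter> Collect P) \<le> t'"
    using card_mono[of "{..<t'}"] by fastforce
  then show ?thesis
    using enat by (simp add: sum.If_cases)
qed simp

definition exp_ennreal :: "ereal \<Rightarrow> ennreal" where
  "exp_ennreal x = (if x = \<infinity> then \<infinity> else if x = -\<infinity> then 0 else ennreal (exp (real_of_ereal x)))"

lemma exp_ennreal_ereal [simp]: "exp_ennreal (ereal r) = ennreal (exp r)"
  and exp_ennreal_zero [simp]: "exp_ennreal 0 = 1"
  by (simp_all add: exp_ennreal_def zero_ereal_def)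

lemma exp_ennreal_mono: "x \<le> y \<Longrightarrow> exp_ennreal x \<le> exp_ennreal y"
  by (cases x; cases y) (auto simp: exp_ennreal_def)

lemma exp_ennreal_add_ereal: "exp_ennreal (ereal r + z) = ennreal (exp r) * exp_ennreal z"
  by (cases z) (auto simp: exp_ennreal_def exp_add ennreal_mult)

lemma measurable_exp_ennreal [measurable]: "exp_ennreal \<in> borel_measurable borel"
  unfolding exp_ennreal_def by measurable

lemma exp_ennreal_llr:
  "exp_ennreal (llr q p) = (if q \<le> 0 then 0 else if p \<le> 0 then \<infinity> else ennreal (q / p))"
  by (simp add: llr_def exp_ennreal_def)

lemma measurable_llr [measurable]:
  assumes [measurable]: "f \<in> borel_measurable N" "g \<in> borel_measurable N"
  shows "(\<lambda>x. llr (f x) (g x)) \<in> borel_measurable N"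
  unfolding llr_def by measurable

lemma nn_integral_density_exp_llr_le:
  assumes p: "p \<in> borel_measurable \<mu>" "\<And>x. x \<in> space \<mu> \<Longrightarrow> 0 \<le> p x"
    and q: "q \<in> borel_measurable \<mu>"
  shows "(\<integral>\<^sup>+ x. exp_ennreal (llr (q x) (p x)) \<partial>density \<mu> (\<lambda>x. ennreal (p x)))
           \<le> (\<integral>\<^sup>+ x. ennreal (q x) \<partial>\<mu>)"
proof -
  have "ennreal (p x) * exp_ennreal (llr (q x) (p x)) \<le> ennreal (q x)" if "0 \<le> p x" for x
    using that by (cases "p x = 0")
      (auto simp: exp_ennreal_llr ennreal_mult''[symmetric] ennreal_mult[symmetric])
  then show ?thesis
    using p q by (simp add: nn_integral_density nn_integral_mono)
qed

definition cusum_below :: "nat \<Rightarrow> (nat \<Rightarrow> ereal) \<Rightarrow> real \<Rightarrow> nat \<Rightarrow> bool" where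
  "cusum_below w Z b n \<longleftrightarrow> (\<forall>k. w < k \<and> k \<le> n \<longrightarrow> cusum w Z k < ereal b)"

fun sr_stopped :: "nat \<Rightarrow> (nat \<Rightarrow> ereal) \<Rightarrow> real \<Rightarrow> nat \<Rightarrow> ennreal" where
  "sr_stopped w Z b 0 = 0"
| "sr_stopped w Z b (Suc n) =
     (if Suc n \<le> w then 0
      else if cusum_below w Z b n then (1 + sr_stopped w Z b n) * exp_ennreal (Z (Suc n))
      else sr_stopped w Z b n)"

lemma cusum_below_0 [simp]: "cusum_below w Z b 0"
  by (simp add: cusum_below_def)

lemma cusum_below_Suc:
  "cusum_below w Z b (Suc n) \<longleftrightarrow>
     cusum_below w Z b n \<and> (w < Suc n \<longrightarrow> cusum w Z (Suc n) < ereal b)"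
  unfolding cusum_below_def using le_Suc_eq by auto

lemma cusum_below_max_finite:
  assumes "cusum_below w Z b n"
  obtains r where "max (cusum w Z n) 0 = ereal r" "0 \<le> r"
proof (cases "n \<le> w")
  case True
  then have "cusum w Z n = 0" by (cases n) auto
  then show ?thesis using that[of 0] by (simp add: zero_ereal_def)
next
  case False
  then have "cusum w Z n < ereal b"
    using assms by (simp add: cusum_below_def)
  then have "max (cusum w Z n) 0 < \<infinity>"
    by (auto simp: max_def)
  moreover have "0 \<le> max (cusum w Z n) 0" by simp
  ultimately show ?thesis using that by (cases "max (cusum w Z n) 0") auto
qed

lemma sr_stopped_invariant:
  "(cusum_below w Z b n \<longrightarrow> exp_ennreal (max (cusum w Z n) 0) \<le> 1 + sr_stopped w Z b n)
   \<and> (\<not> cusum_below w Z b n \<longrightarrow> ennreal (exp b) \<le> sr_stopped w Z b n)"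
proof (induction n)
  case 0
  then show ?case by simp
next
  case (Suc n)
  let ?W = "cusum w Z (Suc n)" and ?U' = "sr_stopped w Z b (Suc n)"
  show ?case
  proof (cases "Suc n \<le> w")
    case True
    then show ?thesis by (simp add: cusum_below_def)
  next
    case after_window: False
    show ?thesis
    proof (cases "cusum_below w Z b n")
      case below: True
      obtain r where r: "max (cusum w Z n) 0 = ereal r" "0 \<le> r"
        using cusum_below_max_finite[OF below] .
      have "exp_ennreal ?W = ennreal (exp r) * exp_ennreal (Z (Suc n))"
        using after_window r by (simp add: exp_ennreal_add_ereal)
      also have "\<dots> \<le> ?U'"
        using Suc.IH below after_window r by (auto intro: mult_right_mono)
      finally have W_le: "exp_ennreal ?W \<le> ?U'" .
      show ?thesis
      proof (cases "cusum_below w Z b (Suc n)")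
        case True
        have "exp_ennreal (max ?W 0) \<le> 1 + ?U'"
          using W_le by (cases "?W \<le> 0") (auto simp: max_def intro: add_increasing)
        then show ?thesis using True by simp
      next
        case False
        then have "ennreal (exp b) \<le> exp_ennreal ?W"
          using below by (metis cusum_below_Suc exp_ennreal_ereal exp_ennreal_mono not_less)
        then show ?thesis using W_le False by simp
      qed
    next
      case False
      then show ?thesis using Suc.IH after_window by (simp add: cusum_below_Suc)
    qed
  qed
qed

lemma exp_le_sr_stopped:
  "ennreal (exp b) \<le> sr_stopped w Z b n + (if cusum_below w Z b n then ennreal (exp b) else 0)"
  using sr_stopped_invariant[of w Z b n] by (auto intro: add_increasing)

lemma cusum_cong:
  "(\<And>k. w < k \<Longrightarrow> k \<le> n \<Longrightarrow> Z k = Z' k) \<Longrightarrow> cusum w Z n = cusum w Z' n"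
  by (induction n) auto

lemma cusum_below_cong:
  "(\<And>k. w < k \<Longrightarrow> k \<le> n \<Longrightarrow> Z k = Z' k) \<Longrightarrow> cusum_below w Z b n = cusum_below w Z' b n"
  unfolding cusum_below_def by (metis cusum_cong order_trans)

lemma sr_stopped_cong:
  "(\<And>k. w < k \<Longrightarrow> k \<le> n \<Longrightarrow> Z k = Z' k) \<Longrightarrow> sr_stopped w Z b n = sr_stopped w Z' b n"
proof (induction n)
  case (Suc n)
  then show ?case using cusum_below_cong[of w n Z Z' b] by simp
qed simp

lemma measurable_cusum:
  assumes "\<And>k. w < k \<Longrightarrow> k \<le> n \<Longrightarrow> (\<lambda>x. Z x k) \<in> borel_measurable N"
  shows "(\<lambda>x. cusum w (Z x) n) \<in> borel_measurable N"
  using assms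
proof (induction n)
  case (Suc n)
  then show ?case by (cases "Suc n \<le> w") auto
qed simp

lemma pred_cusum_below:
  assumes "\<And>k. w < k \<Longrightarrow> k \<le> n \<Longrightarrow> (\<lambda>x. Z x k) \<in> borel_measurable N"
  shows "Measurable.pred N (\<lambda>x. cusum_below w (Z x) b n)"
  using assms
proof (induction n)
  case (Suc n)
  have [measurable]: "(\<lambda>x. cusum w (Z x) (Suc n)) \<in> borel_measurable N"
    using Suc.prems by (rule measurable_cusum)
  have [measurable]: "Measurable.pred N (\<lambda>x. cusum_below w (Z x) b n)"
    using Suc by simp
  show ?case unfolding cusum_below_Suc by measurable
qed simp

lemma measurable_sr_stopped:
  assumes "\<And>k. w < k \<Longrightarrow> k \<le> n \<Longrightarrow> (\<lambda>x. Z x k) \<in> borel_measurable N"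
  shows "(\<lambda>x. sr_stopped w (Z x) b n) \<in> borel_measurable N"
  using assms
proof (induction n)
  case (Suc n)
  have [measurable]: "(\<lambda>x. sr_stopped w (Z x) b n) \<in> borel_measurable N"
    "Measurable.pred N (\<lambda>x. cusum_below w (Z x) b n)"
    using Suc by (simp_all add: pred_cusum_below)
  have [measurable]: "w < Suc n \<Longrightarrow> (\<lambda>x. Z x (Suc n)) \<in> borel_measurable N"
    using Suc.prems by simp
  show ?case by (cases "w < Suc n") simp_all
qed simp

lemma enat_less_nwla_tau:
  assumes "cusum_below w (nwla_Z w est p0 X \<omega>) b m"
  shows "enat m < nwla_tau w est p0 X b \<omega>"
proof -
  have "enat (Suc m) \<le> nwla_tau w est p0 X b \<omega>"
    unfolding nwla_tau_def
  proof (rule INF_greatest)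
    fix n assume "n \<in> {n. w < n \<and> ereal b \<le> nwla_W w est p0 X \<omega> n}"
    then have "\<not> n \<le> m"
      using assms by (auto simp: nwla_W_def cusum_below_def not_le[symmetric])
    then show "enat (Suc m) \<le> enat n" by simp
  qed
  then show ?thesis
    by (simp add: Suc_ile_eq)
qed

definition window_llr ::
    "nat \<Rightarrow> ('a list \<Rightarrow> 'a \<Rightarrow> real) \<Rightarrow> ('a \<Rightarrow> real) \<Rightarrow> (nat \<Rightarrow> 'a) \<Rightarrow> nat \<Rightarrow> ereal"
  where "window_llr w est p0 v n = llr (est (map v [n - w..<n]) (v n)) (p0 (v n))"

lemma nwla_Z_eq_window_llr: "nwla_Z w est p0 X \<omega> = window_llr w est p0 (\<lambda>i. X i \<omega>)"
  by (simp add: fun_eq_iff nwla_Z_def window_llr_def)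

lemma window_llr_cong:
  assumes "0 < w" "w < k" "\<And>i. 1 \<le> i \<Longrightarrow> i \<le> k \<Longrightarrow> v i = v' i"
  shows "window_llr w est p0 v k = window_llr w est p0 v' k"
proof -
  have "map v [k - w..<k] = map v' [k - w..<k]"
    using assms by (intro map_cong) auto
  moreover have "v k = v' k"
    using assms by simp
  ultimately show ?thesis
    by (simp only: window_llr_def)
qed

lemma measurable_window_llr:
  assumes est_meas:
      "(\<lambda>(v, x). est (map v [0..<w]) x) \<in> borel_measurable (PiM {..<w} (\<lambda>_. \<mu>) \<Otimes>\<^sub>M \<mu>)"
    and p0_meas: "p0 \<in> borel_measurable \<mu>"
    and "w \<le> k"
    and V: "\<And>i. k - w \<le> i \<Longrightarrow> i \<le> k \<Longrightarrow> (\<lambda>x. V x i) \<in> measurable N \<mu>"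
  shows "(\<lambda>x. window_llr w est p0 (V x) k) \<in> borel_measurable N"
proof -
  let ?window = "\<lambda>x. restrict (\<lambda>j. V x (k - w + j)) {..<w}"
  have "(\<lambda>x. (?window x, V x k)) \<in> measurable N (PiM {..<w} (\<lambda>_. \<mu>) \<Otimes>\<^sub>M \<mu>)"
    using \<open>w \<le> k\<close> by (intro measurable_Pair measurable_restrict V) auto
  from measurable_compose[OF this est_meas]
  have "(\<lambda>x. est (map (?window x) [0..<w]) (V x k)) \<in> borel_measurable N"
    by simp
  moreover have "map (?window x) [0..<w] = map (V x) [k - w..<k]" for x
    using \<open>w \<le> k\<close> by (intro nth_equalityI) auto
  moreover have "(\<lambda>x. p0 (V x k)) \<in> borel_measurable N"
    using V p0_meas by (intro measurable_compose[OF _ p0_meas]) auto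
  ultimately show ?thesis by (simp add: window_llr_def)
qed

locale nwla_no_change = prob_space M
  for M :: "'w measure" +
  fixes \<mu> :: "'a measure" and X :: "nat \<Rightarrow> 'w \<Rightarrow> 'a"
    and p0 :: "'a \<Rightarrow> real" and est :: "'a list \<Rightarrow> 'a \<Rightarrow> real" and w :: nat
  assumes p0_meas: "p0 \<in> borel_measurable \<mu>"
    and p0_nonneg: "\<And>x. x \<in> space \<mu> \<Longrightarrow> 0 \<le> p0 x"
    and indep: "indep_vars (\<lambda>_. \<mu>) X {1..}"
    and distr_X: "\<And>n. 1 \<le> n \<Longrightarrow> distr M \<mu> (X n) = density \<mu> (\<lambda>x. ennreal (p0 x))"
    and est_meas:
      "(\<lambda>(v, x). est (map v [0..<w]) x) \<in> borel_measurable (PiM {..<w} (\<lambda>_. \<mu>) \<Otimes>\<^sub>M \<mu>)"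
    and est_int: "\<And>xs. (\<integral>\<^sup>+ x. ennreal (est xs x) \<partial>\<mu>) = 1"
    and window_pos: "0 < w"
begin

abbreviation Z :: "'w \<Rightarrow> nat \<Rightarrow> ereal" where
  "Z \<omega> \<equiv> nwla_Z w est p0 X \<omega>"

abbreviation below :: "real \<Rightarrow> nat \<Rightarrow> 'w \<Rightarrow> bool" where
  "below b n \<omega> \<equiv> cusum_below w (Z \<omega>) b n"

abbreviation R :: "real \<Rightarrow> nat \<Rightarrow> 'w \<Rightarrow> ennreal" where
  "R b n \<omega> \<equiv> sr_stopped w (Z \<omega>) b n"

abbreviation expected_tau :: "real \<Rightarrow> ennreal" where
  "expected_tau b \<equiv> \<integral>\<^sup>+ \<omega>. ennreal_of_enat (nwla_tau w est p0 X b \<omega>) \<partial>M"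

definition past :: "nat \<Rightarrow> 'w \<Rightarrow> nat \<Rightarrow> 'a" where
  "past n \<omega> = restrict (\<lambda>i. X i \<omega>) {1..n}"

definition prob_not_stopped :: "real \<Rightarrow> nat \<Rightarrow> ennreal" where
  "prob_not_stopped b n = emeasure M {\<omega> \<in> space M. below b n \<omega>}"

lemma measurable_X: "1 \<le> i \<Longrightarrow> X i \<in> measurable M \<mu>"
  using indep by (auto simp: indep_vars_def2)

lemma measurable_past [measurable]: "past n \<in> measurable M (PiM {1..n} (\<lambda>_. \<mu>))"
  unfolding past_def by (intro measurable_restrict measurable_X) auto

text \<open>The next observation enters as a path restricted to {n + 1}, since both variables of
  an independent pair must take values in the same type.\<close>
lemma indep_past:
  "indep_var (PiM {1..n} (\<lambda>_. \<mu>)) (past n)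
     (PiM {Suc n} (\<lambda>_. \<mu>)) (\<lambda>\<omega>. restrict (\<lambda>i. X i \<omega>) {Suc n})"
  unfolding past_def using indep by (rule indep_var_restrict) auto

lemma Z_eq_window_llr_past:
  assumes "w < k" "k \<le> n"
  shows "Z \<omega> k = window_llr w est p0 (past n \<omega>) k"
  unfolding nwla_Z_eq_window_llr using window_pos assms
  by (intro window_llr_cong) (auto simp: past_def)

lemma measurable_window_llr_past_space:
  assumes "w < k" "k \<le> n"
  shows "(\<lambda>v. window_llr w est p0 v k) \<in> borel_measurable (PiM {1..n} (\<lambda>_. \<mu>))"
  using assms window_pos by (intro measurable_window_llr[OF est_meas p0_meas]) auto

lemma measurable_Z: "w < k \<Longrightarrow> (\<lambda>\<omega>. Z \<omega> k) \<in> borel_measurable M"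
  unfolding nwla_Z_eq_window_llr using window_pos
  by (intro measurable_window_llr[OF est_meas p0_meas] measurable_X) auto

lemma measurable_R [measurable]: "R b n \<in> borel_measurable M"
  by (intro measurable_sr_stopped measurable_Z)

lemma pred_below [measurable]: "Measurable.pred M (below b n)"
  by (intro pred_cusum_below measurable_Z)

lemma below_eq_cusum_below_past:
  "below b n \<omega> = cusum_below w (window_llr w est p0 (past n \<omega>)) b n"
  by (intro cusum_below_cong Z_eq_window_llr_past)

lemma R_eq_sr_stopped_past:
  "R b n \<omega> = sr_stopped w (window_llr w est p0 (past n \<omega>)) b n"
  by (intro sr_stopped_cong Z_eq_window_llr_past)

lemma expected_exp_llr_le_1:
  assumes "length xs = w" "set xs \<subseteq> space \<mu>" "1 \<le> k"
  shows "(\<integral>\<^sup>+ \<omega>. exp_ennreal (llr (est xs (X k \<omega>)) (p0 (X k \<omega>))) \<partial>M) \<le> 1"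
proof -
  let ?v = "restrict (\<lambda>i. xs ! i) {..<w}"
  have "?v \<in> space (PiM {..<w} (\<lambda>_. \<mu>))"
    using assms(1,2) by (auto simp: space_PiM)
  from measurable_Pair2[OF est_meas this]
  have "(\<lambda>x. est (map ?v [0..<w]) x) \<in> borel_measurable \<mu>"
    by simp
  moreover have "map ?v [0..<w] = xs"
    using assms(1) by (intro nth_equalityI) auto
  ultimately have [measurable]: "est xs \<in> borel_measurable \<mu>"
    by simp
  have "(\<integral>\<^sup>+ \<omega>. exp_ennreal (llr (est xs (X k \<omega>)) (p0 (X k \<omega>))) \<partial>M)
      = (\<integral>\<^sup>+ x. exp_ennreal (llr (est xs x) (p0 x)) \<partial>distr M \<mu> (X k))"
    using measurable_X[OF assms(3)] p0_meas by (simp add: nn_integral_distr)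
  also have "\<dots> \<le> 1"
    using nn_integral_density_exp_llr_le[OF p0_meas p0_nonneg, of "est xs"] est_int assms(3)
    by (simp add: distr_X)
  finally show ?thesis .
qed

definition lr_next :: "nat \<Rightarrow> (nat \<Rightarrow> 'a) \<times> 'a \<Rightarrow> ennreal" where
  "lr_next n = (\<lambda>(v, x). exp_ennreal (window_llr w est p0 (v(Suc n := x)) (Suc n)))"

lemma measurable_lr_next:
  assumes "w \<le> n"
  shows "lr_next n \<in> borel_measurable (PiM {1..n} (\<lambda>_. \<mu>) \<Otimes>\<^sub>M \<mu>)"
proof -
  have "(\<lambda>vx. ((fst vx)(Suc n := snd vx)) i) \<in> measurable (PiM {1..n} (\<lambda>_. \<mu>) \<Otimes>\<^sub>M \<mu>) \<mu>"
    if "Suc n - w \<le> i" "i \<le> Suc n" for i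
    using that assms by (cases "i = Suc n")
      (auto intro!: measurable_compose[OF measurable_fst measurable_component_singleton])
  then have "(\<lambda>vx. window_llr w est p0 ((fst vx)(Suc n := snd vx)) (Suc n))
      \<in> borel_measurable (PiM {1..n} (\<lambda>_. \<mu>) \<Otimes>\<^sub>M \<mu>)"
    using assms by (intro measurable_window_llr[OF est_meas p0_meas]) auto
  then show ?thesis
    by (simp add: lr_next_def case_prod_beta')
qed

lemma exp_Z_Suc_eq_lr_next:
  "w \<le> n \<Longrightarrow> exp_ennreal (Z \<omega> (Suc n)) = lr_next n (past n \<omega>, X (Suc n) \<omega>)"
  unfolding lr_next_def nwla_Z_eq_window_llr using window_pos
  by (auto simp: past_def intro!: arg_cong[where f=exp_ennreal] window_llr_cong)

lemma expected_lr_next_le_1: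
  assumes "w \<le> n" "v \<in> space (PiM {1..n} (\<lambda>_. \<mu>))"
  shows "(\<integral>\<^sup>+ \<omega>. lr_next n (v, X (Suc n) \<omega>) \<partial>M) \<le> 1"
proof -
  have "map (v(Suc n := x)) [Suc n - w..<Suc n] = map v [Suc n - w..<Suc n]" for x
    by (intro map_cong) auto
  then have "lr_next n (v, x) = exp_ennreal (llr (est (map v [Suc n - w..<Suc n]) x) (p0 x))" for x
    by (simp add: lr_next_def window_llr_def)
  moreover have "(\<integral>\<^sup>+ \<omega>. exp_ennreal (llr (est (map v [Suc n - w..<Suc n]) (X (Suc n) \<omega>))
      (p0 (X (Suc n) \<omega>))) \<partial>M) \<le> 1"
    using assms window_pos by (intro expected_exp_llr_le_1) (auto simp: space_PiM)
  ultimately show ?thesis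
    by (simp only:)
qed

lemma nn_integral_mult_exp_Z_le:
  assumes "w \<le> n" and h [measurable]: "h \<in> borel_measurable (PiM {1..n} (\<lambda>_. \<mu>))"
  shows "(\<integral>\<^sup>+ \<omega>. h (past n \<omega>) * exp_ennreal (Z \<omega> (Suc n)) \<partial>M) \<le> (\<integral>\<^sup>+ \<omega>. h (past n \<omega>) \<partial>M)"
proof -
  note [measurable] = measurable_lr_next[OF assms(1)] measurable_X[of "Suc n", simplified]
  have hg: "(\<lambda>(v, u). h v * lr_next n (v, u (Suc n)))
      \<in> borel_measurable (PiM {1..n} (\<lambda>_. \<mu>) \<Otimes>\<^sub>M PiM {Suc n} (\<lambda>_. \<mu>))"
    unfolding case_prod_beta' by measurable
  have "(\<integral>\<^sup>+ \<omega>. h (past n \<omega>) * exp_ennreal (Z \<omega> (Suc n)) \<partial>M)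
      = (\<integral>\<^sup>+ \<omega>. (\<lambda>(v, u). h v * lr_next n (v, u (Suc n)))
                  (past n \<omega>, restrict (\<lambda>i. X i \<omega>) {Suc n}) \<partial>M)"
    using assms(1) by (simp add: exp_Z_Suc_eq_lr_next)
  also have "\<dots> = (\<integral>\<^sup>+ \<omega>. \<integral>\<^sup>+ \<omega>'. h (past n \<omega>) * lr_next n (past n \<omega>, X (Suc n) \<omega>') \<partial>M \<partial>M)"
    using nn_integral_indep_var[OF indep_past hg] by simp
  also have "\<dots> = (\<integral>\<^sup>+ \<omega>. h (past n \<omega>) * \<integral>\<^sup>+ \<omega>'. lr_next n (past n \<omega>, X (Suc n) \<omega>') \<partial>M \<partial>M)"
    by (intro nn_integral_cong nn_integral_cmult) (simp add: measurable_Pair2)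
  also have "\<dots> \<le> (\<integral>\<^sup>+ \<omega>. h (past n \<omega>) \<partial>M)"
    using expected_lr_next_le_1[OF assms(1)] measurable_space[OF measurable_past]
    by (intro nn_integral_mono) (metis mult.right_neutral mult_left_mono zero_le)
  finally show ?thesis .
qed

lemma expected_R_Suc_le:
  "(\<integral>\<^sup>+ \<omega>. R b (Suc n) \<omega> \<partial>M) \<le> (\<integral>\<^sup>+ \<omega>. R b n \<omega> \<partial>M) + prob_not_stopped b n"
proof (cases "Suc n \<le> w")
  case False
  then have "w \<le> n" by simp
  let ?P = "PiM {1..n} (\<lambda>_. \<mu>)"
  define A where "A v \<longleftrightarrow> cusum_below w (window_llr w est p0 v) b n" for v
  define U where "U v = sr_stopped w (window_llr w est p0 v) b n" for v
  define r where "r v = (if A v then 0 else U v)" for v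
  define h where "h v = (if A v then 1 + U v else 0)" for v
  have [measurable]: "Measurable.pred ?P A" "U \<in> borel_measurable ?P"
    unfolding A_def U_def
    by (intro pred_cusum_below measurable_sr_stopped measurable_window_llr_past_space; simp)+
  have r_h [measurable]: "r \<in> borel_measurable ?P" "h \<in> borel_measurable ?P"
    unfolding r_def h_def by measurable
  have [measurable]: "(\<lambda>\<omega>. Z \<omega> (Suc n)) \<in> borel_measurable M"
    using \<open>w \<le> n\<close> by (intro measurable_Z) simp
  note past_eqs = A_def U_def below_eq_cusum_below_past R_eq_sr_stopped_past
  have R_Suc: "R b (Suc n) \<omega> = r (past n \<omega>) + h (past n \<omega>) * exp_ennreal (Z \<omega> (Suc n))" for \<omega>
    using False by (simp add: r_def h_def past_eqs)
  have r_plus_h: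
    "r (past n \<omega>) + h (past n \<omega>) = R b n \<omega> + indicator {\<omega> \<in> space M. below b n \<omega>} \<omega>"
    if "\<omega> \<in> space M" for \<omega>
    using that by (simp add: r_def h_def past_eqs add.commute)
  have "(\<integral>\<^sup>+ \<omega>. R b (Suc n) \<omega> \<partial>M)
      = (\<integral>\<^sup>+ \<omega>. r (past n \<omega>) \<partial>M) + (\<integral>\<^sup>+ \<omega>. h (past n \<omega>) * exp_ennreal (Z \<omega> (Suc n)) \<partial>M)"
    unfolding R_Suc by (intro nn_integral_add) auto
  also have "\<dots> \<le> (\<integral>\<^sup>+ \<omega>. r (past n \<omega>) \<partial>M) + (\<integral>\<^sup>+ \<omega>. h (past n \<omega>) \<partial>M)"
    using \<open>w \<le> n\<close> by (intro add_left_mono nn_integral_mult_exp_Z_le r_h)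
  also have "\<dots> = (\<integral>\<^sup>+ \<omega>. r (past n \<omega>) + h (past n \<omega>) \<partial>M)"
    by (intro nn_integral_add[symmetric]) auto
  also have "\<dots> = (\<integral>\<^sup>+ \<omega>. R b n \<omega> + indicator {\<omega> \<in> space M. below b n \<omega>} \<omega> \<partial>M)"
    by (intro nn_integral_cong r_plus_h)
  also have "\<dots> = (\<integral>\<^sup>+ \<omega>. R b n \<omega> \<partial>M) + prob_not_stopped b n"
    by (subst nn_integral_add) (auto simp: prob_not_stopped_def)
  finally show ?thesis .
qed simp

lemma expected_R_le_sum:
  "(\<integral>\<^sup>+ \<omega>. R b N \<omega> \<partial>M) \<le> (\<Sum>m<N. prob_not_stopped b m)"
proof (induction N)
  case (Suc N)
  then show ?case
    using expected_R_Suc_le[of b N] by (simp add: add_right_mono order_trans)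
qed simp

lemma sum_prob_not_stopped_le:
  "(\<Sum>m<N. prob_not_stopped b m) \<le> expected_tau b"
proof -
  have "(\<Sum>m<N. prob_not_stopped b m) = (\<integral>\<^sup>+ \<omega>. (\<Sum>m<N. if below b m \<omega> then 1 else 0) \<partial>M)"
    by (subst nn_integral_sum)
      (auto simp: prob_not_stopped_def intro!: sum.cong nn_integral_cong
        simp flip: nn_integral_indicator split: split_indicator)
  also have "\<dots> \<le> expected_tau b"
    by (intro nn_integral_mono sum_indicator_le_ennreal_of_enat enat_less_nwla_tau)
  finally show ?thesis .
qed

lemma exp_le_expected_R:
  "ennreal (exp b) \<le> (\<integral>\<^sup>+ \<omega>. R b N \<omega> \<partial>M) + ennreal (exp b) * prob_not_stopped b N"
proof -
  have "ennreal (exp b) = (\<integral>\<^sup>+ \<omega>. ennreal (exp b) \<partial>M)"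
    by (simp add: emeasure_space_1)
  also have "\<dots> \<le> (\<integral>\<^sup>+ \<omega>. R b N \<omega> + ennreal (exp b) * indicator {\<omega> \<in> space M. below b N \<omega>} \<omega> \<partial>M)"
  proof (rule nn_integral_mono)
    fix \<omega> assume "\<omega> \<in> space M"
    then show "ennreal (exp b) \<le> R b N \<omega> + ennreal (exp b) * indicator {\<omega> \<in> space M. below b N \<omega>} \<omega>"
      using exp_le_sr_stopped[of b w "Z \<omega>" N] by (simp split: split_indicator if_splits)
  qed
  also have "\<dots> = (\<integral>\<^sup>+ \<omega>. R b N \<omega> \<partial>M) + ennreal (exp b) * prob_not_stopped b N"
    by (subst nn_integral_add) (auto simp: prob_not_stopped_def nn_integral_cmult_indicator)
  finally show ?thesis .
qed

theorem exp_le_expected_tau: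
  "ennreal (exp b) \<le> expected_tau b"
proof (rule ennreal_le_of_le_plus_summable)
  show "ennreal (exp b) \<le> expected_tau b + ennreal (exp b) * prob_not_stopped b N" for N
    using exp_le_expected_R expected_R_le_sum sum_prob_not_stopped_le
    by (meson add_right_mono order_trans)
qed (use sum_prob_not_stopped_le in auto)

end

theorem lemma4:
  fixes M :: "'w measure" and \<mu> :: "'a measure"
    and X :: "nat \<Rightarrow> 'w \<Rightarrow> 'a"
    and p0 :: "'a \<Rightarrow> real" and est :: "'a list \<Rightarrow> 'a \<Rightarrow> real"
    and w :: nat
  assumes "prob_space M"
    and "sigma_finite_measure \<mu>"
    and p0_meas: "p0 \<in> borel_measurable \<mu>"
    and p0_nonneg: "\<And>x. x \<in> space \<mu> \<Longrightarrow> 0 \<le> p0 x"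
    and p0_int: "(\<integral>\<^sup>+ x. ennreal (p0 x) \<partial>\<mu>) = 1"
    and indep: "prob_space.indep_vars M (\<lambda>_. \<mu>) X {1..}"
    and distr: "\<And>n. 1 \<le> n \<Longrightarrow> distr M \<mu> (X n) = density \<mu> (\<lambda>x. ennreal (p0 x))"
    and est_meas: "\<And>k. (\<lambda>(v, x). est (map v [0..<k]) x)
                     \<in> borel_measurable (PiM {..<k} (\<lambda>_. \<mu>) \<Otimes>\<^sub>M \<mu>)"
    and est_nonneg: "\<And>xs x. x \<in> space \<mu> \<Longrightarrow> 0 \<le> est xs x"
    and est_int: "\<And>xs. (\<integral>\<^sup>+ x. ennreal (est xs x) \<partial>\<mu>) = 1"
    and "0 < w"
  shows "(\<forall>b>0. (\<integral>\<^sup>+ \<omega>. ennreal_of_enat (nwla_tau w est p0 X b \<omega>) \<partial>M) \<ge> ennreal (exp b))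
       \<and> (\<forall>\<alpha>. 0 < \<alpha> \<and> \<alpha> < 1 \<longrightarrow>
            1 / (\<integral>\<^sup>+ \<omega>. ennreal_of_enat (nwla_tau w est p0 X \<bar>ln \<alpha>\<bar> \<omega>) \<partial>M) \<le> ennreal \<alpha>)"
proof -
  interpret nwla_no_change M \<mu> X p0 est w
    by (intro nwla_no_change.intro nwla_no_change_axioms.intro) (fact assms)+
  have "1 / expected_tau \<bar>ln \<alpha>\<bar> \<le> ennreal \<alpha>" if "0 < \<alpha>" "\<alpha> < 1" for \<alpha>
  proof (rule one_divide_le_ennreal)
    have "exp \<bar>ln \<alpha>\<bar> = 1 / \<alpha>"
      using that by (simp add: abs_of_neg exp_minus inverse_eq_divide)
    then show "ennreal (1 / \<alpha>) \<le> expected_tau \<bar>ln \<alpha>\<bar>"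
      using exp_le_expected_tau by metis
  qed fact
  then show ?thesis
    using exp_le_expected_tau by blast
qed

end
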